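(* Let $n\ge 1$ and $m\ge 2$ be integers with $m\nmid n$, and let $k$ be a nonnegative integer. If $mk>n$, then $\theta_{m,k}=\mathbf{0}$, i.e. $\theta_{m,k}(x)=(0,\dots,0)$ for every $x\in\mathbb{F}_2^n$.
   Context: For $x=(x_0,\dots,x_{n-1})\in\mathbb{F}_2^n$, indices of coordinates are taken modulo $n$. For a nonnegative integer $k$, the map $\theta_{m,k}\colon\mathbb{F}_2^n\to\mathbb{F}_2^n$ is defined by $\theta_{m,k}(x)=y$ with $y_i=x_{i+mk}\prod_{1\le j\le mk-1,\ m\nmid j}(x_{i+j}+1)$ for $i\in\{0,\dots,n-1\}$ (for $k=0$ the empty product is $1$, so $\theta_{m,0}$ is the identity map). *)

theory Defs
  imports "HOL-Library.Z2"
begin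

text \<open>Vectors in F_2^n are modelled as functions nat => bit, where only the
coordinates 0..n-1 matter; indices are taken modulo n.\<close>

definition theta :: "nat \<Rightarrow> nat \<Rightarrow> nat \<Rightarrow> (nat \<Rightarrow> bit) \<Rightarrow> nat \<Rightarrow> bit" where
  "theta n m k x i =
     x ((i + m * k) mod n) *
     (\<Prod>j\<in>{j. 1 \<le> j \<and> j \<le> m * k - 1 \<and> \<not> m dvd j}. (x ((i + j) mod n) + 1))"

end

theory Submission
  imports Defs
begin

text \<open>Since \<open>m\<close> does not divide \<open>n\<close>, the shift \<open>j = m k - n\<close> is one of the indices
of the product in \<open>theta\<close>, and \<open>x (i + j) = x (i + m k)\<close> because indices are taken
modulo \<open>n\<close>. So every coordinate contains a factor \<open>a (a + 1)\<close>, which vanishes over \<open>\<bbbF>\<^sub>2\<close>.\<close>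

lemma bit_mult_plus_one_self: "(a :: bit) * (a + 1) = 0"
  by (cases a) simp_all

lemma theta_eq_0_if_index_hits_shift:
  assumes "1 \<le> j" and "j \<le> m * k - 1" and "\<not> m dvd j"
    and "(i + j) mod n = (i + m * k) mod n"
  shows "theta n m k x i = 0"
proof -
  let ?S = "{j. 1 \<le> j \<and> j \<le> m * k - 1 \<and> \<not> m dvd j}"
  let ?a = "x ((i + m * k) mod n)"
  have "finite ?S"
    by (rule finite_subset[of _ "{..m * k}"]) auto
  moreover have "j \<in> ?S"
    using assms(1-3) by simp
  ultimately have "(\<Prod>j'\<in>?S. x ((i + j') mod n) + 1)
      = (?a + 1) * (\<Prod>j'\<in>?S - {j}. x ((i + j') mod n) + 1)"
    using assms(4) by (simp only: prod.remove)
  then have "theta n m k x i = ?a * (?a + 1) * (\<Prod>j'\<in>?S - {j}. x ((i + j') mod n) + 1)"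
    unfolding theta_def by (simp only: mult.assoc)
  then show ?thesis
    by (simp only: bit_mult_plus_one_self mult_zero_left)
qed

theorem lemma1:
  fixes n m k :: nat and x :: "nat \<Rightarrow> bit"
  assumes "n \<ge> 1" and "m \<ge> 2" and "\<not> m dvd n" and "m * k > n"
  shows "\<forall>i < n. theta n m k x i = 0"
proof (intro allI impI)
  fix i
  define j where "j = m * k - n"
  have "n = m * k - j"
    using assms(4) unfolding j_def by simp
  then have "\<not> m dvd j"
    using assms(3) by (metis dvd_diff_nat dvd_triv_left)
  moreover have "(i + j) mod n = (i + m * k) mod n"
    using assms(4) unfolding j_def by (metis add.assoc le_add_diff_inverse2 less_imp_le mod_add_self2)
  moreover have "1 \<le> j" and "j \<le> m * k - 1"
    using assms(1,4) unfolding j_def by simp_all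
  ultimately show "theta n m k x i = 0"
    by (intro theta_eq_0_if_index_hits_shift)
qed

end
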